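(* Let $\Phi=(G,\varphi)$ be a complex unit gain graph of order $n$. Then $$r(G)-2\theta(G)\leq r(\Phi)\leq r(G)+2\theta(G).$$
   Context: A complex unit gain graph ($\mathbb{T}$-gain graph) $\Phi=(G,\varphi)$ consists of a finite simple graph $G$ (the underlying graph) with vertex set $\{v_1,\dots,v_n\}$ and a gain function $\varphi$ assigning to each oriented edge $e_{ij}$ (from $v_i$ to $v_j$, where $v_iv_j\in E(G)$) a complex number $\varphi(e_{ij})$ of modulus $1$, with $\varphi(e_{ji})=\varphi(e_{ij})^{-1}=\overline{\varphi(e_{ij})}$. The adjacency matrix $A(\Phi)$ is the $n\times n$ Hermitian matrix whose $(i,j)$ entry is $\varphi(e_{ij})$ if $v_iv_j\in E(G)$ and $0$ otherwise; $r(\Phi)$ denotes the rank of $A(\Phi)$. $r(G)$ denotes the rank of the ($0$-$1$) adjacency matrix of $G$. $\theta(G)=|E(G)|-|V(G)|+\omega(G)$ is the dimension of the cycle space of $G$, where $\omega(G)$ is the number of connected components of $G$. *)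

theory Defs
  imports "HOL-Analysis.Analysis"
begin

text \<open>A T-gain graph additionally has a gain function phi
on oriented edges with unit modulus and phi(e_ji) = conjugate (= inverse) of phi(e_ij).\<close>

definition simple_graph :: "('n \<Rightarrow> 'n \<Rightarrow> bool) \<Rightarrow> bool" where
  "simple_graph E \<longleftrightarrow> (\<forall>u v. E u v \<longrightarrow> E v u) \<and> (\<forall>u. \<not> E u u)"

definition unit_gain :: "('n \<Rightarrow> 'n \<Rightarrow> bool) \<Rightarrow> ('n \<Rightarrow> 'n \<Rightarrow> complex) \<Rightarrow> bool" where
  "unit_gain E \<phi> \<longleftrightarrow> (\<forall>u v. E u v \<longrightarrow> norm (\<phi> u v) = 1 \<and> \<phi> v u = inverse (\<phi> u v))"

definition adj_mat :: "('n::finite \<Rightarrow> 'n \<Rightarrow> bool) \<Rightarrow> real^'n^'n" where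
  "adj_mat E = (\<chi> i j. if E i j then 1 else 0)"

definition gain_adj_mat :: "('n::finite \<Rightarrow> 'n \<Rightarrow> bool) \<Rightarrow> ('n \<Rightarrow> 'n \<Rightarrow> complex) \<Rightarrow> complex^'n^'n" where
  "gain_adj_mat E \<phi> = (\<chi> i j. if E i j then \<phi> i j else 0)"

definition graph_edges :: "('n \<Rightarrow> 'n \<Rightarrow> bool) \<Rightarrow> 'n set set" where
  "graph_edges E = {{u, v} | u v. E u v}"

definition num_components :: "('n \<Rightarrow> 'n \<Rightarrow> bool) \<Rightarrow> nat" where
  "num_components E = card (UNIV // {(u, v). E\<^sup>*\<^sup>* u v})"

definition cyclomatic :: "('n::finite \<Rightarrow> 'n \<Rightarrow> bool) \<Rightarrow> int" where
  "cyclomatic E = int (card (graph_edges E)) - int CARD('n) + int (num_components E)"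

end

(* Switching by a unit-valued vertex function s replaces A(Phi) by D^* A(Phi) D with
   D = diag s, which does not change the rank.  Deleting the edges one at a time, an edge
   whose removal disconnects its endpoints can be given gain 1 by rescaling s on one side,
   while an edge lying on a cycle lowers theta(G) by one.  Hence some switching makes every
   gain equal to 1 outside a set B of at most theta(G) edges.  The switched A(Phi) then
   differs from A(G) only in the entries of B, and a matrix supported on k edges has rank
   at most 2k, so |r(Phi) - r(G)| <= 2 theta(G). *)

theory Submission
  imports Defs
begin

section \<open>Rank of matrices over a field\<close>

lemma rank_add_le:
  fixes A B :: "'a::field^'n^'m"
  shows "rank (A + B) \<le> rank A + rank B"
proof -
  obtain BA where BA: "BA \<subseteq> rows A" "vec.independent BA" "rows A \<subseteq> vec.span BA"
      "card BA = vec.dim (rows A)"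
    using vec.basis_exists by blast
  obtain BB where BB: "BB \<subseteq> rows B" "vec.independent BB" "rows B \<subseteq> vec.span BB"
      "card BB = vec.dim (rows B)"
    using vec.basis_exists by blast
  have "rows (A + B) \<subseteq> vec.span (BA \<union> BB)"
  proof
    fix x assume "x \<in> rows (A + B)"
    then obtain i where "x = row i A + row i B" by (auto simp: rows_def row_def vec_eq_iff)
    moreover have "row i A \<in> vec.span (BA \<union> BB)" "row i B \<in> vec.span (BA \<union> BB)"
      using BA(3) BB(3) vec.span_mono[of BA "BA \<union> BB"] vec.span_mono[of BB "BA \<union> BB"]
      by (auto simp: rows_def)
    ultimately show "x \<in> vec.span (BA \<union> BB)" by (simp add: vec.span_add)
  qed
  then have "vec.dim (rows (A + B)) \<le> card (BA \<union> BB)"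
    using BA(2) BB(2) by (intro vec.dim_le_card) (auto intro: vec.finiteI_independent)
  also have "\<dots> \<le> card BA + card BB" by (rule card_Un_le)
  finally show ?thesis unfolding row_rank_def_gen using BA(4) BB(4) by simp
qed

lemma rank_le_card_nonzero_rows:
  fixes X :: "'a::field^'n::finite^'m::finite"
  shows "rank X \<le> card {i. row i X \<noteq> 0}"
proof -
  let ?Z = "{i. row i X \<noteq> 0}"
  have "row i X \<in> vec.span ((\<lambda>i. row i X) ` ?Z)" for i
    by (cases "row i X = 0") (auto intro: vec.span_base vec.span_zero)
  then have "rows X \<subseteq> vec.span ((\<lambda>i. row i X) ` ?Z)"
    by (auto simp: rows_def)
  then have "vec.dim (rows X) \<le> card ((\<lambda>i. row i X) ` ?Z)"
    by (intro vec.dim_le_card) auto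
  also have "\<dots> \<le> card ?Z" by (rule card_image_le) auto
  finally show ?thesis unfolding row_rank_def_gen .
qed

lemma rank_le_two_if_support_in_pair:
  fixes X :: "'a::field^'n::finite^'n"
  assumes "\<And>i j. X$i$j \<noteq> 0 \<Longrightarrow> {i, j} = e"
  shows "rank X \<le> 2"
proof (cases "\<exists>a b. e = {a, b}")
  case True
  then obtain a b where e: "e = {a, b}" by blast
  have "{i. row i X \<noteq> 0} \<subseteq> {a, b}"
    using assms by (auto simp: e row_def vec_eq_iff doubleton_eq_iff)
  then have "card {i. row i X \<noteq> 0} \<le> card {a, b}" by (intro card_mono) auto
  also have "\<dots> \<le> 2" by (simp add: card_insert_if)
  finally show ?thesis using rank_le_card_nonzero_rows[of X] by linarith
next
  case False
  then have "{i. row i X \<noteq> 0} = {}" using assms by (auto simp: row_def vec_eq_iff)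
  then show ?thesis using rank_le_card_nonzero_rows[of X] by simp
qed

lemma rank_le_two_card_edge_support:
  fixes X :: "'a::field^'n::finite^'n"
  assumes "\<And>i j. X$i$j \<noteq> 0 \<Longrightarrow> {i, j} \<in> B"
  shows "rank X \<le> 2 * card B"
  using finite[of B] assms
proof (induction B arbitrary: X rule: finite_induct)
  case empty
  then have "{i. row i X \<noteq> 0} = {}" by (auto simp: row_def vec_eq_iff)
  then show ?case using rank_le_card_nonzero_rows[of X] by simp
next
  case (insert e F)
  define X\<^sub>e where "X\<^sub>e = (\<chi> i j. if {i, j} = e then X$i$j else 0)"
  define X\<^sub>F where "X\<^sub>F = (\<chi> i j. if {i, j} = e then 0 else X$i$j)"
  have "rank X\<^sub>e \<le> 2" by (rule rank_le_two_if_support_in_pair) (auto simp: X\<^sub>e_def split: if_splits)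
  moreover have "rank X\<^sub>F \<le> 2 * card F"
    using insert.prems by (intro insert.IH) (auto simp: X\<^sub>F_def split: if_splits)
  moreover have "X = X\<^sub>e + X\<^sub>F" by (simp add: X\<^sub>e_def X\<^sub>F_def vec_eq_iff)
  ultimately show ?case using rank_add_le[of X\<^sub>e X\<^sub>F] insert.hyps by simp
qed

lemma rank_le_if_differ_on_edges:
  fixes X Y :: "'a::field^'n::finite^'n"
  assumes "\<And>i j. X$i$j \<noteq> Y$i$j \<Longrightarrow> {i, j} \<in> B"
  shows "rank X \<le> rank Y + 2 * card B"
proof -
  have "rank (X - Y) \<le> 2 * card B"
    using assms by (intro rank_le_two_card_edge_support) auto
  then show ?thesis using rank_add_le[of Y "X - Y"] by simp
qed

lemma rank_scale_rows_le:
  fixes M :: "'a::field^'n::finite^'m::finite"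
  shows "rank (\<chi> i j. s i * M$i$j) \<le> rank M"
proof -
  have "rows (\<chi> i j. s i * M$i$j) \<subseteq> vec.span (rows M)"
  proof
    fix x assume "x \<in> rows (\<chi> i j. s i * M$i$j)"
    then obtain i where "x = s i *s row i M" by (auto simp: rows_def row_def vec_eq_iff)
    moreover have "row i M \<in> vec.span (rows M)" by (intro vec.span_base) (auto simp: rows_def)
    ultimately show "x \<in> vec.span (rows M)" by (simp add: vec.span_scale)
  qed
  then show ?thesis unfolding row_rank_def_gen by (rule vec.dim_mono)
qed

lemma rank_scale_columns_le:
  fixes M :: "'a::field^'n::finite^'m::finite"
  shows "rank (\<chi> i j. M$i$j * t j) \<le> rank M"
proof -
  define L where "L = (\<lambda>x::'a^'n. \<chi> j. x$j * t j)"
  have "Vector_Spaces.linear (*s) (*s) L"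
    by unfold_locales (simp_all add: L_def vec_eq_iff algebra_simps)
  moreover have "rows (\<chi> i j. M$i$j * t j) = L ` rows M"
    by (auto simp: rows_def L_def row_def)
  ultimately show ?thesis unfolding row_rank_def_gen by (simp add: vec.dim_image_le)
qed

lemma rank_scale_rows_columns:
  fixes M :: "'a::field^'n::finite^'m::finite"
  assumes "\<And>i. s i \<noteq> 0" and "\<And>j. t j \<noteq> 0"
  shows "rank (\<chi> i j. s i * M$i$j * t j) = rank M"
proof (rule antisym)
  let ?N = "\<chi> i j. s i * M$i$j * t j"
  show "rank ?N \<le> rank M"
    using rank_scale_rows_le[of s "\<chi> i j. M$i$j * t j"] rank_scale_columns_le[of M t]
    by (simp add: mult.assoc)
  have "(\<chi> i j. inverse (s i) * (\<chi> i j. ?N$i$j * inverse (t j))$i$j) = M"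
    using assms by (simp add: vec_eq_iff mult.assoc)
  then have "rank M = rank (\<chi> i j. inverse (s i) * (\<chi> i j. ?N$i$j * inverse (t j))$i$j)"
    by simp
  also have "\<dots> \<le> rank (\<chi> i j. ?N$i$j * inverse (t j))"
    by (rule rank_scale_rows_le)
  also have "\<dots> \<le> rank ?N" by (rule rank_scale_columns_le)
  finally show "rank M \<le> rank ?N" .
qed

lemma independent_complexify:
  fixes B :: "(real^'n::finite) set"
  assumes "vec.independent B"
  shows "vec.independent ((\<lambda>x. \<chi> i. complex_of_real (x$i)) ` B)"
proof -
  let ?C = "\<lambda>x::real^'n. \<chi> i. complex_of_real (x$i)"
  have fin: "finite B" using assms by (rule vec.finiteI_independent)
  have inj: "inj ?C" by (auto simp: inj_def vec_eq_iff)
  show ?thesis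
  proof (rule vec.independent_if_scalars_zero)
    show "finite (?C ` B)" using fin by simp
    fix f and y :: "complex^'n"
    assume "(\<Sum>x\<in>?C ` B. f x *s x) = 0" and y: "y \<in> ?C ` B"
    then have "(\<Sum>b\<in>B. f (?C b) * complex_of_real (b$i)) = 0" for i
      by (simp add: sum.reindex inj_on_subset[OF inj] vec_eq_iff sum_component)
    then have "Re (\<Sum>b\<in>B. f (?C b) * complex_of_real (b$i)) = 0"
      "Im (\<Sum>b\<in>B. f (?C b) * complex_of_real (b$i)) = 0" for i
      by simp_all
    then have Re0: "(\<Sum>b\<in>B. Re (f (?C b)) *s b) = 0" and Im0: "(\<Sum>b\<in>B. Im (f (?C b)) *s b) = 0"
      by (simp_all add: vec_eq_iff sum_component Re_sum Im_sum)
    have "\<forall>c. (\<Sum>v\<in>B. c v *s v) = 0 \<longrightarrow> (\<forall>v\<in>B. c v = 0)"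
      using assms by (simp add: vec.independent_explicit)
    note indep = this[rule_format]
    obtain b where "b \<in> B" "y = ?C b" using y by blast
    then show "f y = 0" using indep[OF Re0] indep[OF Im0] by (simp add: complex_eq_iff)
  qed
qed

lemma rank_complexify:
  fixes A :: "real^'n::finite^'m::finite"
  shows "rank (\<chi> i j. complex_of_real (A$i$j)) = rank A"
proof -
  let ?C = "\<lambda>x::real^'n. \<chi> i. complex_of_real (x$i)"
  have inj: "inj ?C" by (auto simp: inj_def vec_eq_iff)
  obtain BA where BA: "BA \<subseteq> rows A" "vec.independent BA" "rows A \<subseteq> vec.span BA"
      "card BA = vec.dim (rows A)"
    using vec.basis_exists by blast
  have fin: "finite BA" using BA(2) by (rule vec.finiteI_independent)
  have "?C x \<in> vec.span (?C ` BA)" if "x \<in> rows A" for x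
  proof -
    have "x \<in> vec.span BA" using BA(3) that by blast
    then obtain u where u: "x = (\<Sum>v\<in>BA. u v *s v)"
      unfolding vec.span_finite[OF fin] by blast
    have "?C x = (\<Sum>v\<in>BA. complex_of_real (u v) *s ?C v)"
      unfolding u by (simp add: vec_eq_iff sum_component)
    also have "\<dots> \<in> vec.span (?C ` BA)"
      by (intro vec.span_sum vec.span_scale vec.span_base) auto
    finally show ?thesis .
  qed
  then have "vec.dim (?C ` rows A) = card (?C ` BA)"
    using BA(1) by (intro vec.dim_unique[OF _ _ independent_complexify[OF BA(2)] refl]) auto
  moreover have "rows (\<chi> i j. complex_of_real (A$i$j)) = ?C ` rows A"
    by (auto simp: rows_def row_def)
  ultimately have "vec.dim (rows (\<chi> i j. complex_of_real (A$i$j))) = card (?C ` BA)"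
    by simp
  also have "\<dots> = card BA" using inj by (simp add: card_image inj_on_subset)
  finally show ?thesis unfolding row_rank_def_gen using BA(4) by simp
qed

section \<open>Deleting an edge\<close>

definition delete_edge :: "('n \<Rightarrow> 'n \<Rightarrow> bool) \<Rightarrow> 'n \<Rightarrow> 'n \<Rightarrow> 'n \<Rightarrow> 'n \<Rightarrow> bool" where
  "delete_edge E a b = (\<lambda>x y. E x y \<and> {x, y} \<noteq> {a, b})"

lemma delete_edge_le: "delete_edge E a b x y \<Longrightarrow> E x y"
  by (simp add: delete_edge_def)

lemma delete_edge_cases:
  "E x y \<Longrightarrow> delete_edge E a b x y \<or> (x = a \<and> y = b) \<or> (x = b \<and> y = a)"
  by (auto simp: delete_edge_def doubleton_eq_iff)

lemma symp_delete_edge: "symp E \<Longrightarrow> symp (delete_edge E a b)"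
  by (auto simp: symp_def delete_edge_def insert_commute)

lemma unit_gain_delete_edge: "unit_gain E \<phi> \<Longrightarrow> unit_gain (delete_edge E a b) \<phi>"
  by (simp add: unit_gain_def delete_edge_def)

lemma graph_edges_delete_edge:
  assumes "E a b"
  shows "graph_edges E = insert {a, b} (graph_edges (delete_edge E a b))"
    and "{a, b} \<notin> graph_edges (delete_edge E a b)"
  using assms unfolding graph_edges_def delete_edge_def by blast+

lemma card_graph_edges_delete_edge:
  fixes E :: "'n::finite \<Rightarrow> 'n \<Rightarrow> bool"
  shows "E a b \<Longrightarrow> card (graph_edges E) = Suc (card (graph_edges (delete_edge E a b)))"
  using graph_edges_delete_edge[of E a b] by simp

lemma equiv_reachable: "symp E \<Longrightarrow> equiv UNIV {(u, v). E\<^sup>*\<^sup>* u v}"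
  using symp_rtranclp[of E] by (auto simp: equiv_def refl_on_def sym_def trans_def symp_def)

lemma rtranclp_delete_edge_le: "(delete_edge E a b)\<^sup>*\<^sup>* x y \<Longrightarrow> E\<^sup>*\<^sup>* x y"
  by (induction rule: rtranclp_induct) (auto dest: delete_edge_le intro: rtranclp.rtrancl_into_rtrancl)

lemma rtranclp_delete_edge_cases:
  assumes "E\<^sup>*\<^sup>* x y"
  shows "(delete_edge E a b)\<^sup>*\<^sup>* x y
    \<or> (delete_edge E a b)\<^sup>*\<^sup>* x a \<and> (delete_edge E a b)\<^sup>*\<^sup>* b y
    \<or> (delete_edge E a b)\<^sup>*\<^sup>* x b \<and> (delete_edge E a b)\<^sup>*\<^sup>* a y"
  using assms
proof (induction rule: rtranclp_induct)
  case (step y z)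
  from delete_edge_cases[of E y z a b, OF step(2)] show ?case
    using step(3) by (meson rtranclp.rtrancl_into_rtrancl rtranclp.rtrancl_refl)
qed simp

lemma rtranclp_delete_edge_iff:
  assumes "symp E" and ab: "(delete_edge E a b)\<^sup>*\<^sup>* a b"
  shows "(delete_edge E a b)\<^sup>*\<^sup>* = E\<^sup>*\<^sup>*"
proof (intro ext iffI)
  fix x y
  have "symp (delete_edge E a b)\<^sup>*\<^sup>*"
    using symp_rtranclp[OF symp_delete_edge[OF assms(1)]] .
  then have ba: "(delete_edge E a b)\<^sup>*\<^sup>* b a" using ab by (rule sympD)
  assume "E\<^sup>*\<^sup>* x y"
  then show "(delete_edge E a b)\<^sup>*\<^sup>* x y"
    using rtranclp_delete_edge_cases[of E x y a b] rtranclp_trans[OF _ ab] rtranclp_trans[OF _ ba]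
    by (meson rtranclp_trans)
qed (rule rtranclp_delete_edge_le)

lemma num_components_delete_edge_le:
  fixes E :: "'n::finite \<Rightarrow> 'n \<Rightarrow> bool"
  assumes "symp E"
  shows "num_components (delete_edge E a b) \<le> num_components E + 1"
proof -
  let ?D = "delete_edge E a b"
  define R where "R = {(u, v). E\<^sup>*\<^sup>* u v}"
  define R' where "R' = {(u, v). ?D\<^sup>*\<^sup>* u v}"
  have eqR: "equiv UNIV R" unfolding R_def using assms by (rule equiv_reachable)
  have eqR': "equiv UNIV R'" unfolding R'_def using assms by (intro equiv_reachable symp_delete_edge)
  have "R `` (R' `` {x}) = R `` {x}" for x
    by (auto simp: R_def R'_def intro: rtranclp_trans dest: rtranclp_delete_edge_le)
  then have image_class: "R `` X = R `` {x}" if "X = R' `` {x}" for X x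
    using that by simp
  \<comment> \<open>every \<open>R\<close>-class is a union of \<open>R'\<close>-classes, and only the \<open>R'\<close>-class of \<open>b\<close> can merge
    with another one\<close>
  let ?Q = "UNIV // R' - {R' `` {b}}"
  have "inj_on ((``) R) ?Q"
  proof (rule inj_onI)
    fix X Y assume X: "X \<in> ?Q" and Y: "Y \<in> ?Q" and "R `` X = R `` Y"
    obtain x y where x: "X = R' `` {x}" and y: "Y = R' `` {y}"
      using X Y unfolding quotient_def by blast
    have "\<not> ?D\<^sup>*\<^sup>* x b" "\<not> ?D\<^sup>*\<^sup>* b y"
      using X Y x y eq_equiv_class_iff[OF eqR'] by (auto simp: R'_def)
    moreover have "R `` {x} = R `` {y}"
      using \<open>R `` X = R `` Y\<close> image_class[OF x] image_class[OF y] by simp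
    then have "E\<^sup>*\<^sup>* x y"
      using eq_equiv_class_iff[OF eqR, of x y] by (simp add: R_def)
    ultimately have "?D\<^sup>*\<^sup>* x y"
      using rtranclp_delete_edge_cases[of E x y a b] by blast
    then show "X = Y" using x y eq_equiv_class_iff[OF eqR'] by (auto simp: R'_def)
  qed
  moreover have "(``) R ` ?Q \<subseteq> UNIV // R"
    using image_class by (auto simp: quotient_def)
  ultimately have "card ?Q \<le> card (UNIV // R)"
    by (meson card_inj_on_le finite)
  moreover have "card (UNIV // R') \<le> card ?Q + 1"
    by (cases "R' `` {b} \<in> UNIV // R'") (simp_all add: card_Suc_Diff1)
  moreover have "num_components E = card (UNIV // R)" "num_components ?D = card (UNIV // R')"
    by (simp_all add: num_components_def R_def R'_def)
  ultimately show ?thesis by linarith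
qed

lemma num_components_no_edges:
  fixes E :: "'n::finite \<Rightarrow> 'n \<Rightarrow> bool"
  assumes "\<And>x y. \<not> E x y"
  shows "num_components E = CARD('n)"
proof -
  have "E\<^sup>*\<^sup>* = (=)" using assms by (auto simp: fun_eq_iff elim: rtranclp.cases)
  then have "UNIV // {(u, v). E\<^sup>*\<^sup>* u v} = (\<lambda>x. {x}) ` UNIV"
    by (auto simp: quotient_def)
  then show ?thesis unfolding num_components_def by (simp add: card_image)
qed

lemma cyclomatic_no_edges:
  fixes E :: "'n::finite \<Rightarrow> 'n \<Rightarrow> bool"
  assumes "graph_edges E = {}"
  shows "cyclomatic E = 0"
proof -
  have "\<And>x y. \<not> E x y" using assms by (auto simp: graph_edges_def)
  then show ?thesis using assms by (simp add: cyclomatic_def num_components_no_edges)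
qed

lemma cyclomatic_delete_edge_le:
  fixes E :: "'n::finite \<Rightarrow> 'n \<Rightarrow> bool"
  assumes "symp E" and "E a b"
  shows "cyclomatic (delete_edge E a b) \<le> cyclomatic E"
  using num_components_delete_edge_le[OF assms(1), of a b]
    card_graph_edges_delete_edge[of E a b, OF assms(2)]
  unfolding cyclomatic_def by linarith

lemma cyclomatic_delete_cycle_edge:
  fixes E :: "'n::finite \<Rightarrow> 'n \<Rightarrow> bool"
  assumes "symp E" and "E a b" and "(delete_edge E a b)\<^sup>*\<^sup>* a b"
  shows "cyclomatic E = cyclomatic (delete_edge E a b) + 1"
  using rtranclp_delete_edge_iff[OF assms(1,3)] card_graph_edges_delete_edge[of E a b, OF assms(2)]
  by (simp add: cyclomatic_def num_components_def)

section \<open>Switching\<close>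

text \<open>For unit-valued \<open>s\<close>, \<open>cnj (s u) = inverse (s u)\<close>, so this is the gain function
  of the switched gain graph \<open>\<Phi>\<^sup>s\<close>.\<close>
definition switched_gain :: "('n \<Rightarrow> complex) \<Rightarrow> ('n \<Rightarrow> 'n \<Rightarrow> complex) \<Rightarrow> 'n \<Rightarrow> 'n \<Rightarrow> complex" where
  "switched_gain s \<phi> u v = cnj (s u) * \<phi> u v * s v"

lemma cnj_mult_self_unit: "norm (z::complex) = 1 \<Longrightarrow> cnj z * z = 1"
  by (metis complex_norm_square mult.commute of_real_1 power_one)

lemma switched_gain_reverse:
  assumes "unit_gain E \<phi>" and "E u v"
  shows "switched_gain s \<phi> v u = cnj (switched_gain s \<phi> u v)"
proof -
  have "norm (\<phi> u v) = 1" "\<phi> v u = inverse (\<phi> u v)"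
    using assms unfolding unit_gain_def by blast+
  then have "\<phi> v u = cnj (\<phi> u v)"
    using divide_conv_cnj[of "\<phi> u v" 1] by (simp add: inverse_eq_divide)
  then show ?thesis by (simp add: switched_gain_def mult_ac)
qed

lemma switching_across_bridge:
  fixes E :: "'n \<Rightarrow> 'n \<Rightarrow> bool"
  assumes "symp E" and "unit_gain E \<phi>" and "E a b"
    and not_conn: "\<not> (delete_edge E a b)\<^sup>*\<^sup>* a b"
    and s': "\<forall>w. norm (s' w) = 1"
    and balanced: "\<forall>u v. delete_edge E a b u v \<longrightarrow> {u, v} \<notin> B \<longrightarrow> switched_gain s' \<phi> u v = 1"
  shows "\<exists>s. (\<forall>w. norm (s w) = 1) \<and> (\<forall>u v. E u v \<longrightarrow> {u, v} \<notin> B \<longrightarrow> switched_gain s \<phi> u v = 1)"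
proof -
  let ?D = "delete_edge E a b"
  define X where "X = switched_gain s' \<phi> a b"
  define C where "C = {w. ?D\<^sup>*\<^sup>* a w}"
  \<comment> \<open>rescaling by the unit \<open>X\<close> on the component of \<open>a\<close> keeps the gains inside the
    components of the remaining graph and makes the bridge gain \<open>cnj X * X = 1\<close>\<close>
  define s where "s w = (if w \<in> C then X * s' w else s' w)" for w
  have "norm (\<phi> a b) = 1"
    using assms(2,3) unfolding unit_gain_def by blast
  then have norm_X: "norm X = 1" using s' by (simp add: X_def switched_gain_def norm_mult)
  have "a \<in> C" "b \<notin> C" using not_conn by (simp_all add: C_def)
  have C_closed: "u \<in> C \<longleftrightarrow> v \<in> C" if "?D u v" for u v
    using that symp_delete_edge[OF assms(1)]
    by (auto simp: C_def intro: rtranclp.rtrancl_into_rtrancl dest: sympD)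
  have "switched_gain s \<phi> u v = 1" if uv: "E u v" "{u, v} \<notin> B" for u v
  proof (cases "?D u v")
    case True
    then have "switched_gain s' \<phi> u v = 1" using balanced uv(2) by blast
    moreover have "switched_gain s \<phi> u v = (if u \<in> C then cnj X * X else 1) * switched_gain s' \<phi> u v"
      using C_closed[OF True] by (simp add: s_def switched_gain_def mult_ac)
    ultimately show ?thesis using cnj_mult_self_unit[OF norm_X] by simp
  next
    case False
    have "switched_gain s \<phi> a b = 1"
      using \<open>a \<in> C\<close> \<open>b \<notin> C\<close> cnj_mult_self_unit[OF norm_X]
      by (simp add: s_def X_def switched_gain_def mult_ac)
    moreover have "u = a \<and> v = b \<or> u = b \<and> v = a"
      using False delete_edge_cases[of E u v a b] uv(1) by blast
    ultimately show ?thesis using switched_gain_reverse[OF assms(2,3), of s] by auto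
  qed
  moreover have "norm (s w) = 1" for w
    using s' norm_X by (simp add: s_def norm_mult)
  ultimately show ?thesis by blast
qed

lemma switching_trivializes_gains_off_cyclomatic_edges:
  fixes E :: "'n::finite \<Rightarrow> 'n \<Rightarrow> bool"
  assumes "symp E" and "unit_gain E \<phi>"
  shows "\<exists>s B. (\<forall>w. norm (s w) = 1) \<and> int (card B) \<le> cyclomatic E
    \<and> (\<forall>u v. E u v \<longrightarrow> {u, v} \<notin> B \<longrightarrow> switched_gain s \<phi> u v = 1)"
  using assms
proof (induction "card (graph_edges E)" arbitrary: E)
  case 0
  then have "graph_edges E = {}" by simp
  then have "cyclomatic E = 0" and no_edges: "\<forall>u v. \<not> E u v"
    by (auto simp: graph_edges_def cyclomatic_no_edges)
  show ?case
    by (intro exI[of _ "\<lambda>_. 1"] exI[of _ "{}"] conjI)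
      (simp, simp add: \<open>cyclomatic E = 0\<close>, simp add: no_edges)
next
  case (Suc m)
  then have "graph_edges E \<noteq> {}" by auto
  then obtain a b where "E a b" by (auto simp: graph_edges_def)
  let ?D = "delete_edge E a b"
  have "m = card (graph_edges ?D)"
    using Suc.hyps(2) card_graph_edges_delete_edge[of E a b, OF \<open>E a b\<close>] by simp
  from Suc.hyps(1)[OF this symp_delete_edge[OF Suc.prems(1)] unit_gain_delete_edge[OF Suc.prems(2)]]
  obtain s B where s: "\<forall>w. norm (s w) = 1" and B: "int (card B) \<le> cyclomatic ?D"
    and balanced: "\<forall>u v. ?D u v \<longrightarrow> {u, v} \<notin> B \<longrightarrow> switched_gain s \<phi> u v = 1"
    by blast
  show ?case
  proof (cases "?D\<^sup>*\<^sup>* a b")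
    case True
    have "card (insert {a, b} B) \<le> Suc (card B)" by (simp add: card_insert_if)
    then have "int (card (insert {a, b} B)) \<le> cyclomatic E"
      using B cyclomatic_delete_cycle_edge[OF Suc.prems(1) \<open>E a b\<close> True] by linarith
    moreover have "\<forall>u v. E u v \<longrightarrow> {u, v} \<notin> insert {a, b} B \<longrightarrow> switched_gain s \<phi> u v = 1"
      using balanced by (auto simp: delete_edge_def)
    ultimately show ?thesis using s by (intro exI[of _ s] exI[of _ "insert {a, b} B"] conjI)
  next
    case False
    from switching_across_bridge[OF Suc.prems \<open>E a b\<close> False s balanced]
    obtain s' where "\<forall>w. norm (s' w) = 1"
      and "\<forall>u v. E u v \<longrightarrow> {u, v} \<notin> B \<longrightarrow> switched_gain s' \<phi> u v = 1"
      by blast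
    moreover have "int (card B) \<le> cyclomatic E"
      using B cyclomatic_delete_edge_le[OF Suc.prems(1) \<open>E a b\<close>] by linarith
    ultimately show ?thesis by (intro exI[of _ s'] exI[of _ B] conjI)
  qed
qed

lemma rank_gain_adj_mat_switched:
  fixes E :: "'n::finite \<Rightarrow> 'n \<Rightarrow> bool"
  assumes "\<forall>w. norm (s w) = 1"
  shows "rank (gain_adj_mat E (switched_gain s \<phi>)) = rank (gain_adj_mat E \<phi>)"
proof -
  have "s i \<noteq> 0" for i
    using assms[rule_format, of i] by auto
  moreover have "gain_adj_mat E (switched_gain s \<phi>) = (\<chi> i j. cnj (s i) * gain_adj_mat E \<phi> $i$j * s j)"
    by (simp add: gain_adj_mat_def switched_gain_def vec_eq_iff)
  ultimately show ?thesis
    using rank_scale_rows_columns[of "\<lambda>i. cnj (s i)" s "gain_adj_mat E \<phi>"] by simp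
qed

theorem theorem3p2:
  fixes E :: "'n::finite \<Rightarrow> 'n \<Rightarrow> bool" and \<phi> :: "'n \<Rightarrow> 'n \<Rightarrow> complex"
  assumes "simple_graph E" and "unit_gain E \<phi>"
  shows "int (rank (adj_mat E)) - 2 * cyclomatic E \<le> int (rank (gain_adj_mat E \<phi>))
       \<and> int (rank (gain_adj_mat E \<phi>)) \<le> int (rank (adj_mat E)) + 2 * cyclomatic E"
proof -
  have "symp E" using assms(1) by (simp add: simple_graph_def symp_def)
  from switching_trivializes_gains_off_cyclomatic_edges[OF this assms(2)]
  obtain s B where s: "\<forall>w. norm (s w) = 1" and B: "int (card B) \<le> cyclomatic E"
    and balanced: "\<forall>u v. E u v \<longrightarrow> {u, v} \<notin> B \<longrightarrow> switched_gain s \<phi> u v = 1"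
    by blast
  define N where "N = gain_adj_mat E (switched_gain s \<phi>)"
  define A where "A = (\<chi> i j. complex_of_real (adj_mat E $i$j))"
  have differ: "N$i$j \<noteq> A$i$j \<Longrightarrow> {i, j} \<in> B" for i j
    using balanced unfolding N_def A_def gain_adj_mat_def adj_mat_def by (cases "E i j") auto
  have "rank N = rank (gain_adj_mat E \<phi>)"
    unfolding N_def using s by (rule rank_gain_adj_mat_switched)
  moreover have "rank A = rank (adj_mat E)"
    unfolding A_def by (rule rank_complexify)
  moreover have "rank N \<le> rank A + 2 * card B"
    using differ by (rule rank_le_if_differ_on_edges)
  moreover have "rank A \<le> rank N + 2 * card B"
    using differ by (rule rank_le_if_differ_on_edges) (metis differ)
  ultimately show ?thesis using B by linarith
qed

end
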